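(* Let $R$ be a finite set with $|R|=k$ and two binary operations $\oplus,\odot$, with structure matrices $M_\oplus,M_\odot\in\mathcal L_{k\times k^2}$, so that $\vec{x\oplus y}=M_\oplus\ltimes x\ltimes y$ and $\vec{x\odot y}=M_\odot\ltimes x\ltimes y$ for the vector forms $x,y\in\Delta_k$. Then: (i) $\oplus$ is commutative iff $M_\oplus=M_\oplus W_{[k,k]}$; (ii) $\oplus$ is associative iff $M_\oplus\ltimes M_\oplus=M_\oplus(I_k\otimes M_\oplus)$; (iii) $\delta_k^k$ is the identity for $\oplus$ iff $M_\oplus\ltimes\delta_k^k=M_\oplus W_{[k,k]}\ltimes\delta_k^k=I_k$; (iv) $(R,\oplus)$ has inverses iff there exists a unary operation $\neg$ on $R$, with structure matrix $M_\neg\in\mathcal L_{k\times k}$, such that $M_\oplus(I_k\otimes M_\neg)\mathrm{PR}_k=\delta_k^k\mathbf 1_k^T$; (v) $\odot$ is associative iff $M_\odot\ltimes M_\odot=M_\odot(I_k\otimes M_\odot)$; (vi) $\delta_k^1$ is the identity for $\odot$ iff $M_\odot\ltimes\delta_k^1=M_\odot W_{[k,k]}\ltimes\delta_k^1=I_k$; (vii) both distributive laws hold iff (a) $M_\odot\ltimes M_\oplus=M_\oplus\ltimes M_\odot\ltimes(I_{k^2}\otimes M_\odot)\ltimes(I_k\otimes W_{[k,k]})\ltimes(I_{k^2}\otimes\mathrm{PR}_k)$ and (b) $M_\odot(I_k\otimes M_\oplus)=M_\oplus\ltimes M_\odot\ltimes(I_{k^2}\otimes M_\odot)\ltimes(I_k\otimes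 W_{[k,k]})\ltimes\mathrm{PR}_k$.
   Context: Semi-tensor product: for $A\in\mathcal M_{m\times n}$, $B\in\mathcal M_{p\times q}$ and $t=\mathrm{lcm}(n,p)$, $A\ltimes B:=(A\otimes I_{t/n})(B\otimes I_{t/p})$; all matrix products above are semi-tensor products. $\delta_k^i$ is the $i$-th column of $I_k$, $\Delta_k=\{\delta_k^1,\dots,\delta_k^k\}$, and $\mathcal L_{m\times n}$ is the set of $m\times n$ matrices all of whose columns lie in $\Delta_m$. Elements of $R$ are labeled $1,2,\dots,k-1,0$ and represented in vector form by $i\mapsto\delta_k^i$ ($1\le i\le k-1$), $0\mapsto\delta_k^k$; by convention $\delta_k^1$ represents the candidate multiplicative identity $\mathbf 1$ and $\delta_k^k$ the candidate additive identity $\mathbf 0$. The swap matrix is $W_{[m,n]}=[I_n\otimes\delta_m^1,\dots,I_n\otimes\delta_m^m]$ (so $W_{[m,n]}xy=yx$ for $x\in\mathbb R^m,y\in\mathbb R^n$); the power-reducing matrix is $\mathrm{PR}_k=\mathrm{diag}(\delta_k^1,\dots,\delta_k^k)\in\mathcal L_{k^2\times k}$ (so $\mathrm{PR}_kx=x\ltimes x$ for $x\in\Delta_k$); $\mathbf 1_k$ is the all-ones column vector of length $k$. *)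

theory Defs
  imports "Jordan_Normal_Form.Matrix"
begin

definition kron :: "real mat \<Rightarrow> real mat \<Rightarrow> real mat" where
  "kron A B = mat (dim_row A * dim_row B) (dim_col A * dim_col B)
     (\<lambda>(i, j). A $$ (i div dim_row B, j div dim_col B) * B $$ (i mod dim_row B, j mod dim_col B))"

definition stp :: "real mat \<Rightarrow> real mat \<Rightarrow> real mat" (infixl "\<ltimes>" 70) where
  "stp A B = (let n = dim_col A; p = dim_row B; t = lcm n p
              in kron A (1\<^sub>m (t div n)) * kron B (1\<^sub>m (t div p)))"

text \<open>delta k i: the i-th column of I_k (1-based i), as a k x 1 matrix.\<close>
definition dlt :: "nat \<Rightarrow> nat \<Rightarrow> real mat" where
  "dlt k i = mat k 1 (\<lambda>(r, c). if r = i - 1 then 1 else 0)"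

definition logical_mat :: "nat \<Rightarrow> nat \<Rightarrow> real mat \<Rightarrow> bool" where
  "logical_mat m n A \<longleftrightarrow> dim_row A = m \<and> dim_col A = n \<and>
     (\<forall>j<n. \<exists>i\<in>{1..m}. col A j = col (dlt m i) 0)"

text \<open>Swap matrix W_[m,n] = [I_n \<otimes> delta_m^1, ..., I_n \<otimes> delta_m^m] (entrywise):
  column c = i*n+j (0-based, i<m, j<n) is delta at row j*m+i.\<close>
definition swap_mat :: "nat \<Rightarrow> nat \<Rightarrow> real mat" where
  "swap_mat m n = mat (m * n) (m * n)
     (\<lambda>(r, c). if r = (c mod n) * m + c div n then 1 else 0)"

text \<open>Power-reducing matrix PR_k = diag(delta_k^1, ..., delta_k^k) (k^2 x k).\<close>
definition pr_mat :: "nat \<Rightarrow> real mat" where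
  "pr_mat k = mat (k * k) k (\<lambda>(r, c). if r = c * k + c then 1 else 0)"

definition ones :: "nat \<Rightarrow> real mat" where
  "ones k = mat k 1 (\<lambda>_. 1)"

end

theory Submission
  imports Defs
begin

(* A logical matrix in L_{m x n} is the same thing as a map from column indices {..<n} to row
   indices {..<m}, and products, Kronecker products and semi-tensor products of logical matrices
   are compositions and reindexings of such maps.  Number the elements of R by idx x = lab x - 1
   and read an index below k^n as n digits in base k: a k x k^n logical matrix then is an n-ary
   operation on R, and each matrix identity in (i)-(vii) says that the operations computed by its
   two sides agree, which is exactly the corresponding law of R.  In (vii) the common factor
   M_plus M_times (I_{k^2} \<otimes> M_times) (I_k \<otimes> W_[k,k]) maps (w, x, y, z) to
   (w \<odot> y) \<oplus> (x \<odot> z); the last factor duplicates z in (a) and w in (b). *)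

(* The j-th column of lmat m n f is \<delta>_m^(f j + 1); all indices here are 0-based. *)
definition lmat :: "nat \<Rightarrow> nat \<Rightarrow> (nat \<Rightarrow> nat) \<Rightarrow> real mat" where
  "lmat m n f = mat m n (\<lambda>(i, j). if i = f j then 1 else 0)"

lemma dim_lmat [simp]: "dim_row (lmat m n f) = m" "dim_col (lmat m n f) = n"
  by (simp_all add: lmat_def)

lemma lmat_cong: "(\<And>j. j < n \<Longrightarrow> f j = g j) \<Longrightarrow> lmat m n f = lmat m n g"
  by (auto simp: lmat_def intro!: eq_matI)

lemma lmat_eq_iff:
  assumes "f \<in> {..<n} \<rightarrow> {..<m}"
  shows "lmat m n f = lmat m n g \<longleftrightarrow> (\<forall>j<n. f j = g j)"
proof
  assume eq: "lmat m n f = lmat m n g"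
  show "\<forall>j<n. f j = g j"
  proof (intro allI impI)
    fix j assume "j < n"
    with assms have "f j < m" by auto
    with \<open>j < n\<close> have "lmat m n f $$ (f j, j) = 1"
      and "lmat m n g $$ (f j, j) = (if f j = g j then 1 else 0)"
      by (auto simp: lmat_def)
    with eq show "f j = g j" by (auto split: if_splits)
  qed
qed (blast intro: lmat_cong)

lemma logical_mat_iff_lmat: "logical_mat m n A \<longleftrightarrow> (\<exists>f \<in> {..<n} \<rightarrow> {..<m}. A = lmat m n f)"
proof
  assume A: "logical_mat m n A"
  then obtain h where h: "\<And>j. j < n \<Longrightarrow> h j \<in> {1..m} \<and> col A j = col (dlt m (h j)) 0"
    unfolding logical_mat_def by metis
  have "A = lmat m n (\<lambda>j. h j - 1)"
  proof (rule eq_matI)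
    fix i j assume "i < dim_row (lmat m n (\<lambda>j. h j - 1))" "j < dim_col (lmat m n (\<lambda>j. h j - 1))"
    with A h[of j] show "A $$ (i, j) = lmat m n (\<lambda>j. h j - 1) $$ (i, j)"
      by (auto simp: logical_mat_def lmat_def dlt_def col_def vec_eq_iff)
  qed (use A in \<open>auto simp: logical_mat_def\<close>)
  moreover have "(\<lambda>j. h j - 1) \<in> {..<n} \<rightarrow> {..<m}"
    using h by fastforce
  ultimately show "\<exists>f \<in> {..<n} \<rightarrow> {..<m}. A = lmat m n f" by blast
next
  assume "\<exists>f \<in> {..<n} \<rightarrow> {..<m}. A = lmat m n f"
  then obtain f where f: "f \<in> {..<n} \<rightarrow> {..<m}" and A: "A = lmat m n f" by blast
  have "f j + 1 \<in> {1..m} \<and> col (lmat m n f) j = col (dlt m (f j + 1)) 0" if "j < n" for j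
    using that funcset_mem[OF f, of j] by (auto simp: lmat_def dlt_def intro!: eq_vecI)
  then show "logical_mat m n A"
    unfolding A logical_mat_def by auto
qed

lemma one_mat_lmat: "1\<^sub>m n = lmat n n id"
  by (rule eq_matI) (auto simp: lmat_def)

lemma dlt_lmat: "dlt m i = lmat m 1 (\<lambda>_. i - 1)"
  by (rule eq_matI) (auto simp: dlt_def lmat_def)

lemma swap_mat_lmat: "swap_mat m n = lmat (m * n) (m * n) (\<lambda>j. j mod n * m + j div n)"
  by (rule eq_matI) (auto simp: swap_mat_def lmat_def)

lemma pr_mat_lmat: "pr_mat k = lmat (k * k) k (\<lambda>j. j * k + j)"
  by (rule eq_matI) (auto simp: pr_mat_def lmat_def)

lemma transpose_ones_lmat: "transpose_mat (ones k) = lmat 1 k (\<lambda>_. 0)"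
  by (rule eq_matI) (auto simp: ones_def lmat_def)

lemma digit_pair_less: "a < m \<Longrightarrow> b < k \<Longrightarrow> a * k + b < m * k"
  for a b k m :: nat
proof -
  assume "a < m" "b < k"
  then have "a * k + b < (a + 1) * k" by simp
  also have "\<dots> \<le> m * k" using \<open>a < m\<close> by (intro mult_right_mono) auto
  finally show ?thesis .
qed

lemma digit_triple_regroup: "(a * k + b) * k + c = a * (k * k) + (b * k + c)"
  for a b c k :: nat
  by (simp add: algebra_simps)

lemma range_digit_pair:
  fixes m k :: nat
  assumes a: "range a = {..<m}" and b: "range b = {..<k}"
  shows "range (\<lambda>(x, y). a x * k + b y) = {..<m * k}"
proof
  have "a x < m" "b y < k" for x y
    using rangeI[of a x] rangeI[of b y] unfolding a b by simp_all
  then show "range (\<lambda>(x, y). a x * k + b y) \<subseteq> {..<m * k}"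
    by (auto intro!: digit_pair_less)
next
  show "{..<m * k} \<subseteq> range (\<lambda>(x, y). a x * k + b y)"
  proof
    fix j assume j: "j \<in> {..<m * k}"
    then have "0 < k" by (auto intro: gr0I)
    with j have "j div k \<in> range a" "j mod k \<in> range b"
      unfolding a b by (simp_all add: less_mult_imp_div_less)
    then obtain x y where "a x = j div k" "b y = j mod k" by (metis rangeE)
    then have "j = (\<lambda>(x, y). a x * k + b y) (x, y)" by simp
    then show "j \<in> range (\<lambda>(x, y). a x * k + b y)" by blast
  qed
qed

definition kron_index :: "nat \<Rightarrow> nat \<Rightarrow> (nat \<Rightarrow> nat) \<Rightarrow> (nat \<Rightarrow> nat) \<Rightarrow> nat \<Rightarrow> nat" where
  "kron_index p q f g j = f (j div q) * p + g (j mod q)"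

definition stp_index :: "nat \<Rightarrow> (nat \<Rightarrow> nat) \<Rightarrow> (nat \<Rightarrow> nat) \<Rightarrow> nat \<Rightarrow> nat" where
  "stp_index r f g j = f (g (j div r) * r + j mod r)"

lemma kron_index_funcset:
  assumes "f \<in> {..<n} \<rightarrow> {..<m}" "g \<in> {..<q} \<rightarrow> {..<p}"
  shows "kron_index p q f g \<in> {..<n * q} \<rightarrow> {..<m * p}"
proof
  fix j assume j: "j \<in> {..<n * q}"
  then have "0 < q" by (auto intro: gr0I)
  with j have "j div q < n" "j mod q < q"
    by (simp_all add: less_mult_imp_div_less)
  with assms show "kron_index p q f g j \<in> {..<m * p}"
    by (auto simp: kron_index_def intro: digit_pair_less)
qed

lemma swap_index_funcset: "(\<lambda>j. j mod n * m + j div n) \<in> {..<m * n} \<rightarrow> {..<m * n}"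
  for m n :: nat
proof
  fix j assume j: "j \<in> {..<m * n}"
  then have "0 < n" by (auto intro: gr0I)
  with j have "j div n < m" "j mod n < n"
    by (simp_all add: less_mult_imp_div_less)
  then show "j mod n * m + j div n \<in> {..<m * n}"
    using digit_pair_less[of "j mod n" n "j div n" m] by (simp add: mult.commute)
qed

lemma pr_index_funcset: "(\<lambda>j. j * k + j) \<in> {..<k} \<rightarrow> {..<k * k}"
  for k :: nat
  by (auto intro!: digit_pair_less)

lemma kron_index_eval: "v < q \<Longrightarrow> kron_index p q f g (u * q + v) = f u * p + g v"
  by (simp add: kron_index_def)

lemma stp_index_eval: "v < r \<Longrightarrow> stp_index r f g (u * r + v) = f (g u * r + v)"
  by (simp add: stp_index_def)

lemma lmat_mult:
  assumes "g \<in> {..<q} \<rightarrow> {..<n}"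
  shows "lmat m n f * lmat n q g = lmat m q (f \<circ> g)"
proof (rule eq_matI)
  fix i j assume "i < dim_row (lmat m q (f \<circ> g))" "j < dim_col (lmat m q (f \<circ> g))"
  then have ij: "i < m" "j < q" by simp_all
  then have "g j < n" using assms by auto
  have "(lmat m n f * lmat n q g) $$ (i, j)
      = (\<Sum>l<n. (if i = f l then 1 else 0) * (if l = g j then 1 else 0))"
    using ij by (simp add: lmat_def scalar_prod_def atLeast0LessThan)
  also have "\<dots> = (\<Sum>l<n. if l = g j then (if i = f (g j) then 1 else 0) else 0)"
    by (rule sum.cong) auto
  also have "\<dots> = lmat m q (f \<circ> g) $$ (i, j)"
    using ij \<open>g j < n\<close> by (simp add: lmat_def)
  finally show "(lmat m n f * lmat n q g) $$ (i, j) = lmat m q (f \<circ> g) $$ (i, j)" .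
qed simp_all

lemma kron_lmat:
  assumes "g \<in> {..<q} \<rightarrow> {..<p}"
  shows "kron (lmat m n f) (lmat p q g) = lmat (m * p) (n * q) (kron_index p q f g)"
proof (rule eq_matI)
  fix i j assume "i < dim_row (lmat (m * p) (n * q) (kron_index p q f g))"
    "j < dim_col (lmat (m * p) (n * q) (kron_index p q f g))"
  then have ij: "i < m * p" "j < n * q" by simp_all
  then have "0 < p" "0 < q" by (auto intro: gr0I)
  with ij have bounds: "i div p < m" "i mod p < p" "j div q < n" "j mod q < q"
    by (simp_all add: less_mult_imp_div_less)
  then have "g (j mod q) < p" using assms by auto
  then have "i div p = f (j div q) \<and> i mod p = g (j mod q) \<longleftrightarrow> i = kron_index p q f g j"
    unfolding kron_index_def
    by (metis div_mult_mod_eq div_mult_self3 mod_mult_self3 div_less mod_less add_0_right less_zeroE)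
  with ij bounds show "kron (lmat m n f) (lmat p q g) $$ (i, j)
      = lmat (m * p) (n * q) (kron_index p q f g) $$ (i, j)"
    by (auto simp: kron_def lmat_def)
qed (simp_all add: kron_def)

lemma stp_lmat:
  assumes "g \<in> {..<q} \<rightarrow> {..<p}" "n = p * r" "n' = q * r" "0 < p" "0 < r"
  shows "lmat m n f \<ltimes> lmat p q g = lmat m n' (stp_index r f g)"
proof -
  have "lcm n p = n" using assms(2) by simp
  moreover have "n div p = r" using assms(2,4) by simp
  moreover have "kron_index 1 1 f id = f"
    by (simp add: kron_index_def fun_eq_iff)
  then have "kron (lmat m n f) (1\<^sub>m 1) = lmat m n f"
    by (simp add: one_mat_lmat kron_lmat)
  moreover have "kron (lmat p q g) (1\<^sub>m r) = lmat n n' (kron_index r r g id)"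
    using assms by (simp add: one_mat_lmat kron_lmat)
  moreover have "kron_index r r g id \<in> {..<n'} \<rightarrow> {..<n}"
    using kron_index_funcset[OF assms(1), of id r r] assms(2,3) by simp
  ultimately show ?thesis
    using assms(2,4,5)
    by (simp add: stp_def Let_def lmat_mult comp_def kron_index_def stp_index_def[abs_def])
qed

lemma stp_lmat_basis:
  assumes "n = p * r" "a < p" "0 < r"
  shows "lmat m n f \<ltimes> lmat p 1 (\<lambda>_. a) = lmat m r (\<lambda>j. f (a * r + j))"
proof -
  have "lmat m n f \<ltimes> lmat p 1 (\<lambda>_. a) = lmat m r (stp_index r f (\<lambda>_. a))"
    using assms by (intro stp_lmat) auto
  also have "\<dots> = lmat m r (\<lambda>j. f (a * r + j))"
    by (rule lmat_cong) (simp add: stp_index_def)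
  finally show ?thesis .
qed

lemma lmat_eq_iff_transfer:
  assumes "range code = {..<n}" "inj enc" "\<And>t. enc (l t) < m"
    and "\<And>t. F (code t) = enc (l t)" "\<And>t. G (code t) = enc (r t)"
  shows "lmat m n F = lmat m n G \<longleftrightarrow> (\<forall>t. l t = r t)"
proof -
  have "F \<in> range code \<rightarrow> {..<m}"
    using assms(3,4) by auto
  then have "lmat m n F = lmat m n G \<longleftrightarrow> (\<forall>j<n. F j = G j)"
    unfolding assms(1) by (rule lmat_eq_iff)
  also have "\<dots> \<longleftrightarrow> (\<forall>j \<in> range code. F j = G j)"
    unfolding assms(1) by blast
  also have "\<dots> \<longleftrightarrow> (\<forall>t. l t = r t)"
    using assms(2,4,5) by (simp add: inj_eq)
  finally show ?thesis .
qed

lemma dlt_stp_transpose_ones: "dlt k i \<ltimes> transpose_mat (ones k) = lmat k k (\<lambda>_. i - 1)"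
proof -
  have "dlt k i \<ltimes> transpose_mat (ones k) = lmat k k (stp_index 1 (\<lambda>_. i - 1) (\<lambda>_. 0))"
    unfolding dlt_lmat transpose_ones_lmat by (intro stp_lmat) auto
  also have "\<dots> = lmat k k (\<lambda>_. i - 1)"
    by (rule lmat_cong) (simp add: stp_index_def)
  finally show ?thesis .
qed

lemma inverse_chain_lmat:
  fixes k :: nat
  assumes g: "g \<in> {..<k} \<rightarrow> {..<k}" and k: "0 < k"
  shows "lmat k (k * k) f \<ltimes> kron (1\<^sub>m k) (lmat k k g) \<ltimes> pr_mat k = lmat k k (\<lambda>j. f (j * k + g j))"
proof -
  have "kron (1\<^sub>m k) (lmat k k g) = lmat (k * k) (k * k) (kron_index k k id g)"
    unfolding one_mat_lmat using g by (rule kron_lmat)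
  moreover have "lmat k (k * k) f \<ltimes> lmat (k * k) (k * k) (kron_index k k id g)
      = lmat k (k * k) (stp_index 1 f (kron_index k k id g))"
    using kron_index_funcset[OF _ g, of id k] k by (intro stp_lmat) auto
  moreover have "lmat k (k * k) (stp_index 1 f (kron_index k k id g)) \<ltimes> pr_mat k
      = lmat k k (stp_index 1 (stp_index 1 f (kron_index k k id g)) (\<lambda>j. j * k + j))"
    unfolding pr_mat_lmat using pr_index_funcset k by (intro stp_lmat) auto
  moreover have "\<dots> = lmat k k (\<lambda>j. f (j * k + g j))"
    by (rule lmat_cong) (simp add: stp_index_def kron_index_eval)
  ultimately show ?thesis by simp
qed

lemma distrib_chain_lmat:
  fixes k :: nat
  assumes g: "g \<in> {..<k * k} \<rightarrow> {..<k}" and k: "0 < k"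
  obtains D where "lmat k (k * k) f \<ltimes> lmat k (k * k) g \<ltimes> kron (1\<^sub>m (k * k)) (lmat k (k * k) g)
      \<ltimes> kron (1\<^sub>m k) (swap_mat k k) = lmat k (k * k * k * k) D"
    and "\<And>a b c d. a < k \<Longrightarrow> b < k \<Longrightarrow> c < k \<Longrightarrow> d < k \<Longrightarrow>
      D (((a * k + b) * k + c) * k + d) = f (g (a * k + c) * k + g (b * k + d))"
proof
  define P1 where "P1 = stp_index k f g"
  define P2 where "P2 = stp_index 1 P1 (kron_index k (k * k) id g)"
  define D where "D = stp_index k P2 (kron_index (k * k) (k * k) id (\<lambda>j. j mod k * k + j div k))"
  have P1: "lmat k (k * k) f \<ltimes> lmat k (k * k) g = lmat k (k * k * k) P1"
    unfolding P1_def using g k by (intro stp_lmat) auto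
  have K1: "kron (1\<^sub>m (k * k)) (lmat k (k * k) g)
      = lmat (k * k * k) (k * k * (k * k)) (kron_index k (k * k) id g)"
    unfolding one_mat_lmat using g by (rule kron_lmat)
  have P2: "lmat k (k * k * k) P1 \<ltimes> lmat (k * k * k) (k * k * (k * k)) (kron_index k (k * k) id g)
      = lmat k (k * k * (k * k)) P2"
    unfolding P2_def using kron_index_funcset[of id "k * k" "k * k" g] g k by (intro stp_lmat) auto
  have K2: "kron (1\<^sub>m k) (swap_mat k k) = lmat (k * (k * k)) (k * (k * k))
      (kron_index (k * k) (k * k) id (\<lambda>j. j mod k * k + j div k))"
    unfolding one_mat_lmat swap_mat_lmat using swap_index_funcset by (rule kron_lmat)
  have P3: "lmat k (k * k * (k * k)) P2
      \<ltimes> lmat (k * (k * k)) (k * (k * k)) (kron_index (k * k) (k * k) id (\<lambda>j. j mod k * k + j div k))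
      = lmat k (k * k * k * k) D"
    unfolding D_def using kron_index_funcset[OF _ swap_index_funcset, of id k k] k
    by (intro stp_lmat) (auto simp: ac_simps)
  show "lmat k (k * k) f \<ltimes> lmat k (k * k) g \<ltimes> kron (1\<^sub>m (k * k)) (lmat k (k * k) g)
      \<ltimes> kron (1\<^sub>m k) (swap_mat k k) = lmat k (k * k * k * k) D"
    unfolding P1 K1 P2 K2 P3 ..
  fix a b c d assume digits: "a < k" "b < k" "c < k" "d < k"
  have swap_middle: "kron_index (k * k) (k * k) id (\<lambda>j. j mod k * k + j div k) ((a * k + b) * k + c)
      = a * (k * k) + (c * k + b)"
    unfolding digit_triple_regroup using digits digit_pair_less[of b k c k]
    by (simp add: kron_index_eval)
  have regroup: "(a * (k * k) + (c * k + b)) * k + d = (a * k + c) * (k * k) + (b * k + d)"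
    by (simp add: algebra_simps)
  have apply_last: "kron_index k (k * k) id g ((a * (k * k) + (c * k + b)) * k + d)
      = (a * k + c) * k + g (b * k + d)"
    unfolding regroup using digits digit_pair_less[of b k d k] by (simp add: kron_index_eval)
  have "g (b * k + d) < k"
    using g digits digit_pair_less[of b k d k] by auto
  have "D (((a * k + b) * k + c) * k + d) = P2 ((a * (k * k) + (c * k + b)) * k + d)"
    using digits by (simp add: D_def stp_index_eval swap_middle)
  also have "\<dots> = P1 ((a * k + c) * k + g (b * k + d))"
    by (simp add: P2_def stp_index_def apply_last)
  also have "\<dots> = f (g (a * k + c) * k + g (b * k + d))"
    using \<open>g (b * k + d) < k\<close> by (simp add: P1_def stp_index_eval)
  finally show "D (((a * k + b) * k + c) * k + d) = f (g (a * k + c) * k + g (b * k + d))" .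
qed

locale vector_form =
  fixes lab :: "'a \<Rightarrow> nat" and k :: nat
  assumes bij_lab: "bij_betw lab UNIV {1..k}"
begin

abbreviation vform :: "'a \<Rightarrow> real mat" where "vform x \<equiv> dlt k (lab x)"

definition idx :: "'a \<Rightarrow> nat" where "idx x = lab x - 1"

lemma lab_range: "lab x \<in> {1..k}"
  using bij_lab by (auto simp: bij_betw_def)

lemma range_idx: "range idx = {..<k}"
proof -
  have "range lab = {1..k}" using bij_lab by (simp add: bij_betw_def)
  moreover have "(\<lambda>i. i - 1) ` {1..k} = {..<k}"
    by (auto intro!: image_eqI[of _ _ "Suc _"])
  moreover have "range idx = (\<lambda>i. i - 1) ` range lab"
    by (simp add: idx_def image_image)
  ultimately show ?thesis by simp
qed

lemma idx_less [simp]: "idx x < k"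
  using range_idx by blast

lemma k_pos: "0 < k"
  using idx_less[of undefined] by linarith

lemma inj_idx: "inj idx"
proof (rule injI)
  fix x y assume "idx x = idx y"
  then have "lab x = lab y" using lab_range[of x] lab_range[of y] unfolding idx_def by auto
  then show "x = y" using bij_lab by (simp add: bij_betw_def inj_eq)
qed

lemma lab_surjE:
  assumes "i \<in> {1..k}"
  obtains e where "lab e = i" "idx e = i - 1"
  using assms bij_lab unfolding bij_betw_def idx_def by (metis imageE)

lemma vform_lmat: "vform x = lmat k 1 (\<lambda>_. idx x)"
  by (simp add: dlt_lmat idx_def)

lemma vform_eq_dlt_iff:
  assumes "i \<in> {1..k}"
  shows "vform x = dlt k i \<longleftrightarrow> lab x = i"
proof -
  have lab_x: "(\<lambda>_. lab x - 1) \<in> {..<1} \<rightarrow> {..<k}"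
    using lab_range[of x] by auto
  have "vform x = dlt k i \<longleftrightarrow> lab x - 1 = i - 1"
    unfolding dlt_lmat lmat_eq_iff[OF lab_x] by blast
  with assms lab_range[of x] show ?thesis by force
qed

lemma vform_eq_lmat_iff: "vform x = lmat k 1 g \<longleftrightarrow> g 0 = idx x"
proof -
  have idx_x: "(\<lambda>_. idx x) \<in> {..<1} \<rightarrow> {..<k}" by simp
  show ?thesis
    unfolding vform_lmat lmat_eq_iff[OF idx_x] by auto
qed

lemma stp_vform:
  assumes "n = k * r" "0 < r"
  shows "lmat m n f \<ltimes> vform x = lmat m r (\<lambda>j. f (idx x * r + j))"
  unfolding vform_lmat using assms by (intro stp_lmat_basis) simp_all

lemma lmat_eq_iff_unary:
  assumes "\<And>x. F (idx x) = idx (l x)" "\<And>x. G (idx x) = idx (r x)"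
  shows "lmat k k F = lmat k k G \<longleftrightarrow> (\<forall>x. l x = r x)"
  by (rule lmat_eq_iff_transfer[OF range_idx inj_idx]) (simp_all add: assms)

lemma lmat_eq_iff_binary:
  assumes "\<And>x y. F (idx x * k + idx y) = idx (l x y)"
    and "\<And>x y. G (idx x * k + idx y) = idx (r x y)"
  shows "lmat k (k * k) F = lmat k (k * k) G \<longleftrightarrow> (\<forall>x y. l x y = r x y)"
proof -
  have "lmat k (k * k) F = lmat k (k * k) G
      \<longleftrightarrow> (\<forall>t. (\<lambda>(x, y). l x y) t = (\<lambda>(x, y). r x y) t)"
    by (rule lmat_eq_iff_transfer[OF range_digit_pair[OF range_idx range_idx] inj_idx])
      (simp_all add: assms split: prod.split)
  then show ?thesis by (simp only: split_paired_All prod.case)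
qed

lemma lmat_eq_iff_ternary:
  assumes "\<And>x y z. F ((idx x * k + idx y) * k + idx z) = idx (l x y z)"
    and "\<And>x y z. G ((idx x * k + idx y) * k + idx z) = idx (r x y z)"
  shows "lmat k (k * k * k) F = lmat k (k * k * k) G \<longleftrightarrow> (\<forall>x y z. l x y z = r x y z)"
proof -
  have "lmat k (k * k * k) F = lmat k (k * k * k) G
      \<longleftrightarrow> (\<forall>t. (\<lambda>((x, y), z). l x y z) t = (\<lambda>((x, y), z). r x y z) t)"
    by (rule lmat_eq_iff_transfer[OF range_digit_pair[OF range_digit_pair[OF range_idx range_idx]
          range_idx] inj_idx]) (simp_all add: assms split: prod.split)
  then show ?thesis by (simp only: split_paired_All prod.case)
qed

lemma binary_structure_matrixE:
  assumes "logical_mat k (k * k) M" and "\<And>x y. vform (op x y) = M \<ltimes> vform x \<ltimes> vform y"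
  obtains f where "f \<in> {..<k * k} \<rightarrow> {..<k}" "M = lmat k (k * k) f"
    and "\<And>x y. f (idx x * k + idx y) = idx (op x y)"
proof -
  obtain f where f: "f \<in> {..<k * k} \<rightarrow> {..<k}" and M: "M = lmat k (k * k) f"
    using assms(1) by (auto simp: logical_mat_iff_lmat)
  have "vform (op x y) = lmat k 1 (\<lambda>j. f (idx x * k + (idx y * 1 + j)))" for x y
    unfolding assms(2) M using k_pos by (simp add: stp_vform)
  then have "f (idx x * k + idx y) = idx (op x y)" for x y
    by (simp only: vform_eq_lmat_iff) simp
  with f M show thesis by (rule that)
qed

lemma unary_structure_matrix_iff:
  "logical_mat k k N \<and> (\<forall>x. vform (g x) = N \<ltimes> vform x)
    \<longleftrightarrow> N = lmat k k (\<lambda>j. idx (g (inv_into UNIV idx j)))"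
proof
  assume "logical_mat k k N \<and> (\<forall>x. vform (g x) = N \<ltimes> vform x)"
  then obtain h where N: "N = lmat k k h" and g: "\<And>x. vform (g x) = N \<ltimes> vform x"
    by (auto simp: logical_mat_iff_lmat)
  have "vform (g x) = lmat k 1 (\<lambda>j. h (idx x * 1 + j))" for x
    using g[of x] k_pos unfolding N by (simp add: stp_vform[of k 1])
  then have "h (idx x) = idx (g x)" for x
    by (simp only: vform_eq_lmat_iff) simp
  then show "N = lmat k k (\<lambda>j. idx (g (inv_into UNIV idx j)))"
    unfolding N using range_idx by (intro lmat_cong) (metis f_inv_into_f lessThan_iff)
next
  assume N: "N = lmat k k (\<lambda>j. idx (g (inv_into UNIV idx j)))"
  have "N \<ltimes> vform x = lmat k 1 (\<lambda>j. idx (g (inv_into UNIV idx (idx x * 1 + j))))" for x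
    unfolding N using k_pos by (simp add: stp_vform[of k 1])
  then have "vform (g x) = N \<ltimes> vform x" for x
    by (simp only: vform_eq_lmat_iff) (simp add: inj_idx)
  moreover have "logical_mat k k N"
    unfolding N logical_mat_iff_lmat by auto
  ultimately show "logical_mat k k N \<and> (\<forall>x. vform (g x) = N \<ltimes> vform x)" by blast
qed

context
  fixes op :: "'a \<Rightarrow> 'a \<Rightarrow> 'a" and M :: "real mat"
  assumes logical_M: "logical_mat k (k * k) M"
    and structure_M: "\<And>x y. vform (op x y) = M \<ltimes> vform x \<ltimes> vform y"
begin

lemma commutative_iff: "(\<forall>x y. op x y = op y x) \<longleftrightarrow> M = M \<ltimes> swap_mat k k"
proof -
  obtain f where f: "f \<in> {..<k * k} \<rightarrow> {..<k}" "M = lmat k (k * k) f"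
    and f_op: "\<And>x y. f (idx x * k + idx y) = idx (op x y)"
    using binary_structure_matrixE[OF logical_M structure_M] by metis
  have "M \<ltimes> swap_mat k k = lmat k (k * k) (stp_index 1 f (\<lambda>j. j mod k * k + j div k))"
    unfolding f(2) swap_mat_lmat using swap_index_funcset k_pos by (intro stp_lmat) auto
  moreover have "lmat k (k * k) f = lmat k (k * k) (stp_index 1 f (\<lambda>j. j mod k * k + j div k))
      \<longleftrightarrow> (\<forall>x y. op x y = op y x)"
    using k_pos by (intro lmat_eq_iff_binary) (simp_all add: f_op stp_index_def)
  ultimately show ?thesis using f(2) by simp
qed

lemma associative_iff:
  "(\<forall>x y z. op (op x y) z = op x (op y z)) \<longleftrightarrow> M \<ltimes> M = M \<ltimes> kron (1\<^sub>m k) M"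
proof -
  obtain f where f: "f \<in> {..<k * k} \<rightarrow> {..<k}" "M = lmat k (k * k) f"
    and f_op: "\<And>x y. f (idx x * k + idx y) = idx (op x y)"
    using binary_structure_matrixE[OF logical_M structure_M] by metis
  have "M \<ltimes> M = lmat k (k * k * k) (stp_index k f f)"
    unfolding f(2) using f(1) k_pos by (intro stp_lmat) auto
  moreover have "kron (1\<^sub>m k) M = lmat (k * k) (k * (k * k)) (kron_index k (k * k) id f)"
    unfolding f(2) one_mat_lmat using f(1) by (rule kron_lmat)
  moreover have "lmat k (k * k) f \<ltimes> lmat (k * k) (k * (k * k)) (kron_index k (k * k) id f)
      = lmat k (k * k * k) (stp_index 1 f (kron_index k (k * k) id f))"
    using kron_index_funcset[OF _ f(1), of id k k] k_pos by (intro stp_lmat) auto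
  moreover have "lmat k (k * k * k) (stp_index k f f)
      = lmat k (k * k * k) (stp_index 1 f (kron_index k (k * k) id f))
      \<longleftrightarrow> (\<forall>x y z. op (op x y) z = op x (op y z))"
  proof (rule lmat_eq_iff_ternary)
    fix x y z
    show "stp_index k f f ((idx x * k + idx y) * k + idx z) = idx (op (op x y) z)"
      by (simp add: stp_index_eval f_op)
    show "stp_index 1 f (kron_index k (k * k) id f) ((idx x * k + idx y) * k + idx z)
        = idx (op x (op y z))"
      unfolding digit_triple_regroup
      by (simp add: stp_index_def kron_index_eval digit_pair_less f_op)
  qed
  ultimately show ?thesis using f(2) by simp
qed

lemma identity_iff:
  assumes "i \<in> {1..k}"
  shows "(\<forall>e x. vform e = dlt k i \<longrightarrow> op e x = x \<and> op x e = x)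
    \<longleftrightarrow> M \<ltimes> dlt k i = 1\<^sub>m k \<and> M \<ltimes> swap_mat k k \<ltimes> dlt k i = 1\<^sub>m k"
proof -
  obtain f where f: "f \<in> {..<k * k} \<rightarrow> {..<k}" "M = lmat k (k * k) f"
    and f_op: "\<And>x y. f (idx x * k + idx y) = idx (op x y)"
    using binary_structure_matrixE[OF logical_M structure_M] by metis
  obtain e where e: "lab e = i" using lab_surjE[OF assms] by metis
  have "(\<forall>e x. vform e = dlt k i \<longrightarrow> op e x = x \<and> op x e = x)
      \<longleftrightarrow> (\<forall>x. op e x = x) \<and> (\<forall>x. op x e = x)"
    using assms e bij_lab by (auto simp: vform_eq_dlt_iff bij_betw_def inj_eq)
  moreover have "M \<ltimes> vform e = 1\<^sub>m k \<longleftrightarrow> (\<forall>x. op e x = x)"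
    unfolding f(2) one_mat_lmat using k_pos
    by (simp add: stp_vform lmat_eq_iff_unary f_op)
  moreover have "M \<ltimes> swap_mat k k = lmat k (k * k) (stp_index 1 f (\<lambda>j. j mod k * k + j div k))"
    unfolding f(2) swap_mat_lmat using swap_index_funcset k_pos by (intro stp_lmat) auto
  then have "M \<ltimes> swap_mat k k \<ltimes> vform e = 1\<^sub>m k \<longleftrightarrow> (\<forall>x. op x e = x)"
    unfolding one_mat_lmat using k_pos
    by (simp add: stp_vform lmat_eq_iff_unary f_op stp_index_def)
  ultimately show ?thesis using e by simp
qed

lemma right_inverse_iff:
  assumes "i \<in> {1..k}"
  shows "(\<forall>e. vform e = dlt k i \<longrightarrow> (\<forall>x. \<exists>y. op x y = e))
    \<longleftrightarrow> (\<exists>neg :: 'a \<Rightarrow> 'a. \<exists>N. logical_mat k k N \<and> (\<forall>x. vform (neg x) = N \<ltimes> vform x)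
          \<and> M \<ltimes> kron (1\<^sub>m k) N \<ltimes> pr_mat k = dlt k i \<ltimes> transpose_mat (ones k))"
proof -
  obtain f where f: "M = lmat k (k * k) f"
    and f_op: "\<And>x y. f (idx x * k + idx y) = idx (op x y)"
    using binary_structure_matrixE[OF logical_M structure_M] by metis
  obtain e where e: "lab e = i" "idx e = i - 1" using lab_surjE[OF assms] by metis
  have inverse_eq_iff: "M \<ltimes> kron (1\<^sub>m k) (lmat k k (\<lambda>j. idx (neg (inv_into UNIV idx j))))
      \<ltimes> pr_mat k = dlt k i \<ltimes> transpose_mat (ones k) \<longleftrightarrow> (\<forall>x. op x (neg x) = e)" for neg
    unfolding f dlt_stp_transpose_ones e(2)[symmetric] using k_pos inj_idx
    by (subst inverse_chain_lmat) (auto intro!: lmat_eq_iff_unary simp: f_op)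
  have "(\<forall>e'. vform e' = dlt k i \<longrightarrow> (\<forall>x. \<exists>y. op x y = e')) \<longleftrightarrow> (\<forall>x. \<exists>y. op x y = e)"
    using assms e(1) bij_lab by (auto simp: vform_eq_dlt_iff bij_betw_def inj_eq)
  also have "\<dots> \<longleftrightarrow> (\<exists>neg. \<forall>x. op x (neg x) = e)"
    by (rule choice_iff)
  also have "\<dots> \<longleftrightarrow> (\<exists>neg :: 'a \<Rightarrow> 'a. \<exists>N. logical_mat k k N \<and> (\<forall>x. vform (neg x) = N \<ltimes> vform x)
          \<and> M \<ltimes> kron (1\<^sub>m k) N \<ltimes> pr_mat k = dlt k i \<ltimes> transpose_mat (ones k))"
    using unary_structure_matrix_iff inverse_eq_iff by (metis (no_types, lifting))
  finally show ?thesis .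
qed

end

context
  fixes plus times :: "'a \<Rightarrow> 'a \<Rightarrow> 'a" and Mp Mt :: "real mat"
  assumes logical_Mp: "logical_mat k (k * k) Mp"
    and structure_Mp: "\<And>x y. vform (plus x y) = Mp \<ltimes> vform x \<ltimes> vform y"
    and logical_Mt: "logical_mat k (k * k) Mt"
    and structure_Mt: "\<And>x y. vform (times x y) = Mt \<ltimes> vform x \<ltimes> vform y"
begin

lemma distrib_chain_index:
  obtains D where "Mp \<ltimes> Mt \<ltimes> kron (1\<^sub>m (k * k)) Mt \<ltimes> kron (1\<^sub>m k) (swap_mat k k)
      = lmat k (k * k * k * k) D"
    and "\<And>w x y z. D (((idx w * k + idx x) * k + idx y) * k + idx z)
      = idx (plus (times w y) (times x z))"
proof -
  obtain fp where fp: "Mp = lmat k (k * k) fp"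
    and fp_plus: "\<And>x y. fp (idx x * k + idx y) = idx (plus x y)"
    using binary_structure_matrixE[OF logical_Mp structure_Mp] by metis
  obtain ft where ft: "ft \<in> {..<k * k} \<rightarrow> {..<k}" "Mt = lmat k (k * k) ft"
    and ft_times: "\<And>x y. ft (idx x * k + idx y) = idx (times x y)"
    using binary_structure_matrixE[OF logical_Mt structure_Mt] by metis
  obtain D where D: "Mp \<ltimes> Mt \<ltimes> kron (1\<^sub>m (k * k)) Mt \<ltimes> kron (1\<^sub>m k) (swap_mat k k)
      = lmat k (k * k * k * k) D"
    and D_eval: "\<And>a b c d. a < k \<Longrightarrow> b < k \<Longrightarrow> c < k \<Longrightarrow> d < k \<Longrightarrow>
      D (((a * k + b) * k + c) * k + d) = fp (ft (a * k + c) * k + ft (b * k + d))"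
    unfolding fp ft(2) using distrib_chain_lmat[OF ft(1) k_pos] by metis
  have "D (((idx w * k + idx x) * k + idx y) * k + idx z) = idx (plus (times w y) (times x z))"
    for w x y z
    by (simp add: D_eval fp_plus ft_times)
  with D show thesis by (rule that)
qed

lemma right_distrib_iff:
  "(\<forall>x y z. times (plus x y) z = plus (times x z) (times y z))
    \<longleftrightarrow> Mt \<ltimes> Mp = Mp \<ltimes> Mt \<ltimes> kron (1\<^sub>m (k * k)) Mt \<ltimes> kron (1\<^sub>m k) (swap_mat k k)
          \<ltimes> kron (1\<^sub>m (k * k)) (pr_mat k)"
proof -
  obtain fp where fp: "fp \<in> {..<k * k} \<rightarrow> {..<k}" "Mp = lmat k (k * k) fp"
    and fp_plus: "\<And>x y. fp (idx x * k + idx y) = idx (plus x y)"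
    using binary_structure_matrixE[OF logical_Mp structure_Mp] by metis
  obtain ft where ft: "Mt = lmat k (k * k) ft"
    and ft_times: "\<And>x y. ft (idx x * k + idx y) = idx (times x y)"
    using binary_structure_matrixE[OF logical_Mt structure_Mt] by metis
  obtain D where D: "Mp \<ltimes> Mt \<ltimes> kron (1\<^sub>m (k * k)) Mt \<ltimes> kron (1\<^sub>m k) (swap_mat k k)
      = lmat k (k * k * k * k) D"
    and D_eval: "\<And>w x y z. D (((idx w * k + idx x) * k + idx y) * k + idx z)
      = idx (plus (times w y) (times x z))"
    using distrib_chain_index by metis
  have "Mt \<ltimes> Mp = lmat k (k * k * k) (stp_index k ft fp)"
    unfolding fp(2) ft using fp(1) k_pos by (intro stp_lmat) auto
  moreover have "kron (1\<^sub>m (k * k)) (pr_mat k)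
      = lmat (k * k * (k * k)) (k * k * k) (kron_index (k * k) k id (\<lambda>j. j * k + j))"
    unfolding one_mat_lmat pr_mat_lmat using pr_index_funcset by (rule kron_lmat)
  moreover have "lmat k (k * k * k * k) D \<ltimes> \<dots>
      = lmat k (k * k * k) (stp_index 1 D (kron_index (k * k) k id (\<lambda>j. j * k + j)))"
    using kron_index_funcset[OF _ pr_index_funcset[of k], of id "k * k" "k * k"] k_pos
    by (intro stp_lmat) (auto simp: ac_simps)
  moreover have "lmat k (k * k * k) (stp_index k ft fp)
      = lmat k (k * k * k) (stp_index 1 D (kron_index (k * k) k id (\<lambda>j. j * k + j)))
      \<longleftrightarrow> (\<forall>x y z. times (plus x y) z = plus (times x z) (times y z))"
  proof (rule lmat_eq_iff_ternary)
    fix x y z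
    show "stp_index k ft fp ((idx x * k + idx y) * k + idx z) = idx (times (plus x y) z)"
      by (simp add: stp_index_eval fp_plus ft_times)
    have "kron_index (k * k) k id (\<lambda>j. j * k + j) ((idx x * k + idx y) * k + idx z)
        = ((idx x * k + idx y) * k + idx z) * k + idx z"
      by (simp add: kron_index_eval) (simp add: algebra_simps)
    then show "stp_index 1 D (kron_index (k * k) k id (\<lambda>j. j * k + j))
        ((idx x * k + idx y) * k + idx z) = idx (plus (times x z) (times y z))"
      by (simp add: stp_index_def D_eval)
  qed
  ultimately show ?thesis using D by simp
qed

lemma left_distrib_iff:
  "(\<forall>x y z. times x (plus y z) = plus (times x y) (times x z))
    \<longleftrightarrow> Mt \<ltimes> kron (1\<^sub>m k) Mp = Mp \<ltimes> Mt \<ltimes> kron (1\<^sub>m (k * k)) Mt \<ltimes> kron (1\<^sub>m k) (swap_mat k k)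
          \<ltimes> pr_mat k"
proof -
  obtain fp where fp: "fp \<in> {..<k * k} \<rightarrow> {..<k}" "Mp = lmat k (k * k) fp"
    and fp_plus: "\<And>x y. fp (idx x * k + idx y) = idx (plus x y)"
    using binary_structure_matrixE[OF logical_Mp structure_Mp] by metis
  obtain ft where ft: "Mt = lmat k (k * k) ft"
    and ft_times: "\<And>x y. ft (idx x * k + idx y) = idx (times x y)"
    using binary_structure_matrixE[OF logical_Mt structure_Mt] by metis
  obtain D where D: "Mp \<ltimes> Mt \<ltimes> kron (1\<^sub>m (k * k)) Mt \<ltimes> kron (1\<^sub>m k) (swap_mat k k)
      = lmat k (k * k * k * k) D"
    and D_eval: "\<And>w x y z. D (((idx w * k + idx x) * k + idx y) * k + idx z)
      = idx (plus (times w y) (times x z))"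
    using distrib_chain_index by metis
  have "kron (1\<^sub>m k) Mp = lmat (k * k) (k * (k * k)) (kron_index k (k * k) id fp)"
    unfolding fp(2) one_mat_lmat using fp(1) by (rule kron_lmat)
  moreover have "Mt \<ltimes> \<dots> = lmat k (k * k * k) (stp_index 1 ft (kron_index k (k * k) id fp))"
    unfolding ft using kron_index_funcset[OF _ fp(1), of id k k] k_pos by (intro stp_lmat) auto
  moreover have "lmat k (k * k * k * k) D \<ltimes> pr_mat k
      = lmat k (k * k * k) (stp_index (k * k) D (\<lambda>j. j * k + j))"
    unfolding pr_mat_lmat using pr_index_funcset[of k] k_pos
    by (intro stp_lmat) (auto simp: ac_simps)
  moreover have "lmat k (k * k * k) (stp_index 1 ft (kron_index k (k * k) id fp))
      = lmat k (k * k * k) (stp_index (k * k) D (\<lambda>j. j * k + j))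
      \<longleftrightarrow> (\<forall>x y z. times x (plus y z) = plus (times x y) (times x z))"
  proof (rule lmat_eq_iff_ternary)
    fix x y z
    show "stp_index 1 ft (kron_index k (k * k) id fp) ((idx x * k + idx y) * k + idx z)
        = idx (times x (plus y z))"
      unfolding digit_triple_regroup
      by (simp add: stp_index_def kron_index_eval digit_pair_less fp_plus ft_times)
    have "stp_index (k * k) D (\<lambda>j. j * k + j) ((idx x * k + idx y) * k + idx z)
        = D ((idx x * k + idx x) * (k * k) + (idx y * k + idx z))"
      unfolding digit_triple_regroup by (simp add: stp_index_eval digit_pair_less)
    also have "\<dots> = D (((idx x * k + idx x) * k + idx y) * k + idx z)"
      by (simp only: digit_triple_regroup[of "idx x * k + idx x"])
    finally show "stp_index (k * k) D (\<lambda>j. j * k + j) ((idx x * k + idx y) * k + idx z)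
        = idx (plus (times x y) (times x z))"
      by (simp add: D_eval)
  qed
  ultimately show ?thesis using D by simp
qed

lemma distrib_iff:
  "((\<forall>x y z. times x (plus y z) = plus (times x y) (times x z))
      \<and> (\<forall>x y z. times (plus x y) z = plus (times x z) (times y z)))
    \<longleftrightarrow> Mt \<ltimes> Mp = Mp \<ltimes> Mt \<ltimes> kron (1\<^sub>m (k * k)) Mt \<ltimes> kron (1\<^sub>m k) (swap_mat k k)
          \<ltimes> kron (1\<^sub>m (k * k)) (pr_mat k)
      \<and> Mt \<ltimes> kron (1\<^sub>m k) Mp = Mp \<ltimes> Mt \<ltimes> kron (1\<^sub>m (k * k)) Mt \<ltimes> kron (1\<^sub>m k) (swap_mat k k)
          \<ltimes> pr_mat k"
  using left_distrib_iff right_distrib_iff by blast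

end

end

theorem theorem3p1:
  fixes plus times :: "'a::finite \<Rightarrow> 'a \<Rightarrow> 'a"
    and lab :: "'a \<Rightarrow> nat" and k :: nat and Mp Mt :: "real mat"
  defines "vf \<equiv> (\<lambda>x. dlt k (lab x))"
  assumes card: "card (UNIV :: 'a set) = k"
    and lab: "bij_betw lab UNIV {1..k}"
    and Mp: "logical_mat k (k * k) Mp"
    and Mp_str: "\<forall>x y. vf (plus x y) = Mp \<ltimes> vf x \<ltimes> vf y"
    and Mt: "logical_mat k (k * k) Mt"
    and Mt_str: "\<forall>x y. vf (times x y) = Mt \<ltimes> vf x \<ltimes> vf y"
  shows
    "((\<forall>x y. plus x y = plus y x) \<longleftrightarrow> Mp = Mp \<ltimes> swap_mat k k)
   \<and> ((\<forall>x y z. plus (plus x y) z = plus x (plus y z))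
        \<longleftrightarrow> Mp \<ltimes> Mp = Mp \<ltimes> kron (1\<^sub>m k) Mp)
   \<and> ((\<forall>e x. vf e = dlt k k \<longrightarrow> plus e x = x \<and> plus x e = x)
        \<longleftrightarrow> Mp \<ltimes> dlt k k = 1\<^sub>m k \<and> Mp \<ltimes> swap_mat k k \<ltimes> dlt k k = 1\<^sub>m k)
   \<and> ((\<forall>e. vf e = dlt k k \<longrightarrow> (\<forall>x. \<exists>y. plus x y = e))
        \<longleftrightarrow> (\<exists>neg :: 'a \<Rightarrow> 'a. \<exists>Mn. logical_mat k k Mn
               \<and> (\<forall>x. vf (neg x) = Mn \<ltimes> vf x)
               \<and> Mp \<ltimes> kron (1\<^sub>m k) Mn \<ltimes> pr_mat k = dlt k k \<ltimes> transpose_mat (ones k)))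
   \<and> ((\<forall>x y z. times (times x y) z = times x (times y z))
        \<longleftrightarrow> Mt \<ltimes> Mt = Mt \<ltimes> kron (1\<^sub>m k) Mt)
   \<and> ((\<forall>u x. vf u = dlt k 1 \<longrightarrow> times u x = x \<and> times x u = x)
        \<longleftrightarrow> Mt \<ltimes> dlt k 1 = 1\<^sub>m k \<and> Mt \<ltimes> swap_mat k k \<ltimes> dlt k 1 = 1\<^sub>m k)
   \<and> (((\<forall>x y z. times x (plus y z) = plus (times x y) (times x z))
        \<and> (\<forall>x y z. times (plus x y) z = plus (times x z) (times y z)))
        \<longleftrightarrow>
       (Mt \<ltimes> Mp = Mp \<ltimes> Mt \<ltimes> kron (1\<^sub>m (k * k)) Mt \<ltimes> kron (1\<^sub>m k) (swap_mat k k)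
                     \<ltimes> kron (1\<^sub>m (k * k)) (pr_mat k)
        \<and> Mt \<ltimes> kron (1\<^sub>m k) Mp = Mp \<ltimes> Mt \<ltimes> kron (1\<^sub>m (k * k)) Mt
                     \<ltimes> kron (1\<^sub>m k) (swap_mat k k) \<ltimes> pr_mat k))"
proof -
  interpret vector_form lab k
    by unfold_locales (rule lab)
  have plus: "\<And>x y. vform (plus x y) = Mp \<ltimes> vform x \<ltimes> vform y"
    using Mp_str by (simp add: vf_def)
  have times: "\<And>x y. vform (times x y) = Mt \<ltimes> vform x \<ltimes> vform y"
    using Mt_str by (simp add: vf_def)
  have labels: "1 \<in> {1..k}" "k \<in> {1..k}"
    using k_pos by auto
  show ?thesis
    unfolding vf_def
    by (intro conjI commutative_iff[OF Mp plus] associative_iff[OF Mp plus]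
        identity_iff[OF Mp plus labels(2)] right_inverse_iff[OF Mp plus labels(2)]
        associative_iff[OF Mt times] identity_iff[OF Mt times labels(1)]
        distrib_iff[OF Mp plus Mt times])
qed

end
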